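(* Let $f:\mathbb{R}^n\to\mathbb{R}^n$ be Borel measurable, $\mathbf{X}\subset\mathbb{R}^n$ compact, $\alpha\in(0,1)$, $\lambda$ a Borel probability measure on $\mathbf{X}$ with support $\mathbf{X}$, $\boldsymbol\beta=(\beta_1,\dots,\beta_N)^\top$ a vector of Lipschitz continuous functions on $\mathbb{R}^n$, $\{(x_i,x_i^+)\}_{i=1}^K$ data with $x_i\in\mathbf{X}$ and $x_i^+=f(x_i)$, and $\{z_i\}_{i=1}^{K'}\subset\mathbf{X}$ further points. Let $\mathbf{c}_{N,K}$ be an optimal solution of the linear program \[ \sup_{\mathbf{c}\in\mathbb{R}^N}\ \mathbf{z}^\top\mathbf{c}\quad\text{s.t.}\quad \boldsymbol\beta(x_i)^\top\mathbf{c}\le \mathrm{dist}_{\mathbf{X}}(x_i^+)+\alpha\,\boldsymbol\beta(\mathrm{proj}_{\mathbf{X}}(x_i^+))^\top\mathbf{c}\ \ (i=1,\dots,K),\qquad -1\le\boldsymbol\beta(z_i)^\top\mathbf{c}\le(1-\alpha)^{-1}\ \ (i=1,\dots,K'), \] where $\mathbf{z}=\int_{\mathbf{X}}\boldsymbol\beta(x)\,d\lambda(x)$, and let $v_{N,K}(x)=\boldsymbol\beta(x)^\top\mathbf{c}_{N,K}$. Define $E:\mathbf{X}\to\mathbb{R}$ by $E(x)=v_{N,K}(x)-\mathrm{dist}_{\mathbf{X}}(f(x))-\alpha\,v_{N,K}(\mathrm{proj}_{\mathbf{X}}(f(x)))$. Then \[ \big\{x\in\mathbf{X}: v_{N,K}(x)\le(1-\alpha)^{-1}\sup_{z\in\mathbf{X}}E(z)\big\}\supset\mathbf{X}_\infty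 . \]
   Context: The maximum positively invariant set is $\mathbf{X}_\infty=\{x\in\mathbf{X}: f^{(k)}(x)\in\mathbf{X}\text{ for all } k\in\mathbb{N}_0\}$, where $f^{(k)}$ is the $k$-fold composition of $f$. $\mathrm{proj}_{\mathbf{X}}(x)\in\operatorname{arg\,min}_{y\in\mathbf{X}}\|x-y\|_2$ is the Euclidean projection onto $\mathbf{X}$ (a fixed measurable selection when non-unique), and $\mathrm{dist}_{\mathbf{X}}(x)=\min\{\min_{y\in\mathbf{X}}\|x-y\|_2,1\}$. *)

theory Defs
  imports "HOL-Probability.Probability"
begin

definition distX :: "('a::metric_space) set \<Rightarrow> 'a \<Rightarrow> real" where
  "distX X x = min (infdist x X) 1"

definition is_proj_selection :: "('a::euclidean_space) set \<Rightarrow> ('a \<Rightarrow> 'a) \<Rightarrow> bool" where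
  "is_proj_selection X p \<longleftrightarrow>
     p \<in> borel_measurable borel \<and>
     (\<forall>x. p x \<in> X \<and> (\<forall>y\<in>X. norm (x - p x) \<le> norm (x - y)))"

definition max_pos_inv :: "('a \<Rightarrow> 'a) \<Rightarrow> 'a set \<Rightarrow> 'a set" where
  "max_pos_inv f X = {x \<in> X. \<forall>k::nat. (f ^^ k) x \<in> X}"

definition measure_support :: "('a::metric_space) measure \<Rightarrow> 'a set" where
  "measure_support M = {x. \<forall>e>0. emeasure M (ball x e) > 0}"

definition lp_feasible ::
  "('a::euclidean_space) set \<Rightarrow> ('a \<Rightarrow> 'b::real_inner) \<Rightarrow> real \<Rightarrow> ('a \<Rightarrow> 'a)
   \<Rightarrow> nat \<Rightarrow> (nat \<Rightarrow> 'a) \<Rightarrow> (nat \<Rightarrow> 'a) \<Rightarrow> nat \<Rightarrow> (nat \<Rightarrow> 'a) \<Rightarrow> 'b \<Rightarrow> bool" where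
  "lp_feasible X \<beta> \<alpha> p K xs xp K' zs c \<longleftrightarrow>
     (\<forall>i<K. \<beta> (xs i) \<bullet> c \<le> distX X (xp i) + \<alpha> * (\<beta> (p (xp i)) \<bullet> c)) \<and>
     (\<forall>i<K'. -1 \<le> \<beta> (zs i) \<bullet> c \<and> \<beta> (zs i) \<bullet> c \<le> 1 / (1 - \<alpha>))"

definition lp_optimal ::
  "'b \<Rightarrow> ('a::euclidean_space) set \<Rightarrow> ('a \<Rightarrow> 'b::real_inner) \<Rightarrow> real \<Rightarrow> ('a \<Rightarrow> 'a)
   \<Rightarrow> nat \<Rightarrow> (nat \<Rightarrow> 'a) \<Rightarrow> (nat \<Rightarrow> 'a) \<Rightarrow> nat \<Rightarrow> (nat \<Rightarrow> 'a) \<Rightarrow> 'b \<Rightarrow> bool" where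
  "lp_optimal zv X \<beta> \<alpha> p K xs xp K' zs c \<longleftrightarrow>
     lp_feasible X \<beta> \<alpha> p K xs xp K' zs c \<and>
     (\<forall>c'. lp_feasible X \<beta> \<alpha> p K xs xp K' zs c' \<longrightarrow> zv \<bullet> c' \<le> zv \<bullet> c)"

end

theory Submission
  imports Defs
begin

text \<open>On \<open>X\<^sub>\<infinity>\<close> the orbit never leaves \<open>X\<close>, so the distance term vanishes and the projection
  acts as the identity; with \<open>S = sup E\<close> this gives \<open>v y \<le> S + \<alpha> v (f y)\<close> along every orbit in
  \<open>X\<^sub>\<infinity>\<close>. Iterating, \<open>v x - S/(1-\<alpha>) \<le> \<alpha>\<^sup>k (v (f\<^sup>k x) - S/(1-\<alpha>))\<close>, and the right-hand side
  tends to \<open>0\<close> because \<open>v\<close> is continuous, hence bounded on the compact set \<open>X\<close>.\<close>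

lemma discounted_bound_on_invariant_set:
  fixes v :: "'a \<Rightarrow> real"
  assumes \<alpha>: "0 \<le> \<alpha>" "\<alpha> < 1"
    and invariant: "\<And>y. y \<in> I \<Longrightarrow> f y \<in> I"
    and bounded_above: "\<And>y. y \<in> I \<Longrightarrow> v y \<le> B"
    and step: "\<And>y. y \<in> I \<Longrightarrow> v y \<le> S + \<alpha> * v (f y)"
    and "x \<in> I"
  shows "v x \<le> S / (1 - \<alpha>)"
proof -
  define T where "T = S / (1 - \<alpha>)"
  define w where "w y = v y - T" for y
  have S_eq: "S = (1 - \<alpha>) * T"
    using \<alpha> by (simp add: T_def)
  have w_step: "w y \<le> \<alpha> * w (f y)" if "y \<in> I" for y
    using step[OF that] S_eq unfolding w_def by (simp add: algebra_simps)
  have w_iter: "\<forall>y\<in>I. w y \<le> \<alpha> ^ k * (B - T)" for k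
  proof (induction k)
    case 0
    show ?case using bounded_above by (simp add: w_def)
  next
    case (Suc k)
    show ?case
    proof
      fix y assume "y \<in> I"
      then have "w (f y) \<le> \<alpha> ^ k * (B - T)"
        using Suc invariant by blast
      then have "\<alpha> * w (f y) \<le> \<alpha> * (\<alpha> ^ k * (B - T))"
        using \<alpha>(1) by (rule mult_left_mono)
      then show "w y \<le> \<alpha> ^ Suc k * (B - T)"
        using w_step[OF \<open>y \<in> I\<close>] by (simp add: mult.assoc)
    qed
  qed
  have "(\<lambda>k. \<alpha> ^ k * (B - T)) \<longlonglongrightarrow> 0"
    using \<alpha> by (intro tendsto_mult_left_zero LIMSEQ_power_zero) auto
  then have "w x \<le> 0"
    by (rule LIMSEQ_le_const) (use w_iter \<open>x \<in> I\<close> in auto)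
  then show ?thesis
    unfolding w_def T_def by simp
qed

lemma max_pos_inv_subset: "max_pos_inv f X \<subseteq> X"
  unfolding max_pos_inv_def by auto

lemma max_pos_inv_invariant:
  assumes x: "x \<in> max_pos_inv f X"
  shows "f x \<in> max_pos_inv f X"
proof -
  have "(f ^^ Suc k) x \<in> X" for k
    using x unfolding max_pos_inv_def by blast
  then have "(f ^^ k) (f x) \<in> X" for k
    by (simp add: funpow_Suc_right del: funpow.simps)
  moreover have "f x \<in> X"
    using calculation[of 0] by simp
  ultimately show ?thesis
    unfolding max_pos_inv_def by blast
qed

lemma proj_selection_in: "is_proj_selection X p \<Longrightarrow> p y \<in> X"
  unfolding is_proj_selection_def by blast

lemma proj_selection_fixes:
  assumes "is_proj_selection X p" "y \<in> X"
  shows "p y = y"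
proof -
  have "norm (y - p y) \<le> norm (y - y)"
    using assms unfolding is_proj_selection_def by blast
  then show ?thesis by simp
qed

lemma distX_nonneg: "0 \<le> distX X y"
  unfolding distX_def by (simp add: infdist_nonneg)

lemma distX_eq_0: "y \<in> X \<Longrightarrow> distX X y = 0"
  unfolding distX_def by simp

lemma continuous_on_lipschitz_components:
  fixes \<beta> :: "'a::metric_space \<Rightarrow> real^'m"
  assumes "\<forall>j. \<exists>L. L-lipschitz_on S (\<lambda>x. \<beta> x $ j)"
  shows "continuous_on S \<beta>"
proof -
  have "continuous_on S (\<lambda>x. \<chi> j. \<beta> x $ j)"
    using assms by (intro continuous_on_vec_lambda) (meson lipschitz_on_continuous_on)
  then show ?thesis by simp
qed

lemma residual_on_max_pos_inv:
  assumes "is_proj_selection X p" "y \<in> max_pos_inv f X"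
  shows "v y - distX X (f y) - \<alpha> * v (p (f y)) = v y - \<alpha> * v (f y)"
proof -
  have "f y \<in> X"
    using max_pos_inv_invariant[OF assms(2)] by (rule subsetD[OF max_pos_inv_subset])
  then show ?thesis
    using distX_eq_0 proj_selection_fixes[OF assms(1)] by simp
qed

lemma bdd_above_residual:
  fixes v :: "'a \<Rightarrow> real"
  assumes "\<And>y. y \<in> X \<Longrightarrow> \<bar>v y\<bar> \<le> B" "0 \<le> \<alpha>"
    and "\<And>z. z \<in> X \<Longrightarrow> q z \<in> X" "\<And>z. 0 \<le> d z"
  shows "bdd_above ((\<lambda>z. v z - d z - \<alpha> * v (q z)) ` X)"
proof (rule bdd_aboveI2)
  fix z assume "z \<in> X"
  have "- v (q z) \<le> B"
    using assms(1)[OF assms(3)[OF \<open>z \<in> X\<close>]] by simp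
  then have "\<alpha> * (- v (q z)) \<le> \<alpha> * B"
    using assms(2) by (rule mult_left_mono)
  then show "v z - d z - \<alpha> * v (q z) \<le> B + \<alpha> * B"
    using assms(1)[OF \<open>z \<in> X\<close>] assms(4)[of z] by simp
qed

theorem lemma4:
  fixes f :: "real^'n \<Rightarrow> real^'n"
    and X :: "(real^'n) set"
    and \<alpha> :: real
    and M :: "(real^'n) measure"
    and \<beta> :: "real^'n \<Rightarrow> real^'m"
    and p :: "real^'n \<Rightarrow> real^'n"
    and K K' :: nat
    and xs xp zs :: "nat \<Rightarrow> real^'n"
    and c :: "real^'m"
  assumes f_meas: "f \<in> borel_measurable borel"
    and X_compact: "compact X"
    and \<alpha>: "0 < \<alpha>" "\<alpha> < 1"
    and M_prob: "prob_space M"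
    and M_borel: "sets M = sets borel"
    and M_on_X: "emeasure M (UNIV - X) = 0"
    and M_supp: "measure_support M = X"
    and \<beta>_lip: "\<forall>j. \<exists>L. L-lipschitz_on UNIV (\<lambda>x. \<beta> x $ j)"
    and proj: "is_proj_selection X p"
    and data: "\<forall>i<K. xs i \<in> X \<and> xp i = f (xs i)"
    and zpts: "\<forall>i<K'. zs i \<in> X"
    and opt: "lp_optimal (integral\<^sup>L M \<beta>) X \<beta> \<alpha> p K xs xp K' zs c"
  shows "max_pos_inv f X \<subseteq>
           {x \<in> X. \<beta> x \<bullet> c \<le> (1 / (1 - \<alpha>)) *
              (SUP z\<in>X. \<beta> z \<bullet> c - distX X (f z) - \<alpha> * (\<beta> (p (f z)) \<bullet> c))}"
proof -
  define v where "v y = \<beta> y \<bullet> c" for y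
  define E where "E z = v z - distX X (f z) - \<alpha> * v (p (f z))" for z
  define S where "S = (SUP z\<in>X. E z)"
  have v_cont: "continuous_on X v"
    using continuous_on_lipschitz_components[OF \<beta>_lip] unfolding v_def
    by (rule continuous_on_inner[OF continuous_on_subset[OF _ subset_UNIV] continuous_on_const])
  obtain B where B: "\<And>y. y \<in> X \<Longrightarrow> \<bar>v y\<bar> \<le> B"
    using compact_imp_bounded[OF compact_continuous_image[OF v_cont X_compact]]
    unfolding bounded_iff by fastforce
  have bdd: "bdd_above (E ` X)"
    unfolding E_def
    by (rule bdd_above_residual[OF B]) (use \<alpha> proj_selection_in[OF proj] distX_nonneg in auto)
  have step: "v y \<le> S + \<alpha> * v (f y)" if "y \<in> max_pos_inv f X" for y
  proof -
    have "E y \<le> S"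
      unfolding S_def by (rule cSUP_upper[OF subsetD[OF max_pos_inv_subset that] bdd])
    then show ?thesis
      using residual_on_max_pos_inv[OF proj that] unfolding E_def by simp
  qed
  have v_bounded: "v y \<le> B" if "y \<in> max_pos_inv f X" for y
    using B[OF subsetD[OF max_pos_inv_subset that]] by simp
  have "v x \<le> S / (1 - \<alpha>)" if "x \<in> max_pos_inv f X" for x
    using less_imp_le[OF \<alpha>(1)] \<alpha>(2) max_pos_inv_invariant[of _ f X] v_bounded step that
    by (rule discounted_bound_on_invariant_set)
  then show ?thesis
    using max_pos_inv_subset[of f X] unfolding v_def E_def S_def by (auto simp: subset_iff)
qed

end
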